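(* Let $S$ be a reduced affine monoid. Then $c(S)=c'(S)$.
   Context: A monoid is a commutative cancellative semigroup with identity, written multiplicatively; it is affine if it is a finitely generated submonoid of a finitely generated free abelian group, and reduced if the identity is its only invertible element. Let $\mathcal{A}(S)$ be the (finite) set of atoms of $S$. For $\alpha\in\mathbb{N}_0^{\mathcal{A}(S)}$ write $|\alpha|=\sum_{a\in\mathcal{A}(S)}\alpha(a)$ and $a^{\alpha}=\prod_{a\in\mathcal{A}(S)}a^{\alpha(a)}\in S$. Let $M=\{x^{\alpha}=\prod_a x_a^{\alpha(a)}\mid \alpha\in\mathbb{N}_0^{\mathcal{A}(S)}\}$ be the free commutative monoid on indeterminates $x_a$ ($a\in\mathcal{A}(S)$), and let $\sim_S$ be the congruence on $M$ given by $x^{\alpha}\sim_S x^{\gamma}$ iff $a^{\alpha}=a^{\gamma}$ in $S$ (the defining congruence of $S$, viewed as a subset of $M\times M$). For $\alpha,\gamma\in\mathbb{N}_0^{\mathcal{A}(S)}$ let $\gcd(\alpha,\gamma)(a)=\min\{\alpha(a),\gamma(a)\}$ and $d(\alpha,\gamma)=\max\{|\alpha-\gcd(\alpha,\gamma)|,|\gamma-\gcd(\alpha,\gamma)|\}$. We say $\alpha,\gamma$ can be connected by a $d$-chain if there is a sequence $\alpha=\alpha^{(0)},\alpha^{(1)},\dots,\alpha^{(k)}=\gamma$ in $\mathbb{N}_0^{\mathcal{A}(S)}$ with $a^{\alpha^{(j)}}=a^{\alpha^{(j+1)}}$ and $d(\alpha^{(j)},\alpha^{(j+1)})\le d$ for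 all $j$. The catenary degree $c(S)$ is the minimal non-negative integer $d$ such that whenever $a^{\alpha}=a^{\gamma}$, $\alpha$ and $\gamma$ can be connected by a $d$-chain. $c'(S)$ denotes the minimal non-negative integer $d$ such that there exists a subset $\Lambda\subset M\times M$ generating $\sim_S$ as a semigroup congruence with $|\alpha|\le d$ and $|\gamma|\le d$ for all $(x^{\alpha},x^{\gamma})\in\Lambda$. *)

theory Defs
  imports "HOL-Analysis.Finite_Cartesian_Product"
begin

definition nsmul_vec :: "nat \<Rightarrow> int ^ 'n \<Rightarrow> int ^ 'n" where
  "nsmul_vec k v = (\<chi> i. int k * v $ i)"

definition nlincomb :: "(int ^ 'n) set \<Rightarrow> (int ^ 'n \<Rightarrow> nat) \<Rightarrow> int ^ 'n" where
  "nlincomb G k = (\<Sum>g\<in>G. nsmul_vec (k g) g)"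

definition affine_monoid :: "(int ^ 'n) set \<Rightarrow> bool" where
  "affine_monoid S \<longleftrightarrow> (\<exists>G. finite G \<and> G \<subseteq> S \<and> S = {nlincomb G k | k. True})"

definition reduced_monoid :: "(int ^ 'n) set \<Rightarrow> bool" where
  "reduced_monoid S \<longleftrightarrow> (\<forall>x\<in>S. - x \<in> S \<longrightarrow> x = 0)"

text \<open>Atoms: non-units that are not a sum of two non-units (in a reduced monoid the only
  unit is 0).\<close>
definition atoms :: "(int ^ 'n) set \<Rightarrow> (int ^ 'n) set" where
  "atoms S = {a \<in> S. a \<noteq> 0 \<and> (\<forall>b\<in>S. \<forall>c\<in>S. a = b + c \<longrightarrow> b = 0 \<or> c = 0)}"

text \<open>Exponent vectors alpha in N_0^(A(S)), i.e. functions vanishing off the atoms.\<close>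
definition expvecs :: "(int ^ 'n) set \<Rightarrow> (int ^ 'n \<Rightarrow> nat) set" where
  "expvecs S = {\<alpha>. \<forall>x. x \<notin> atoms S \<longrightarrow> \<alpha> x = 0}"

definition evalf :: "(int ^ 'n) set \<Rightarrow> (int ^ 'n \<Rightarrow> nat) \<Rightarrow> int ^ 'n" where
  "evalf S \<alpha> = nlincomb (atoms S) \<alpha>"

definition flen :: "(int ^ 'n) set \<Rightarrow> (int ^ 'n \<Rightarrow> nat) \<Rightarrow> nat" where
  "flen S \<alpha> = (\<Sum>a\<in>atoms S. \<alpha> a)"

definition fgcd :: "('v \<Rightarrow> nat) \<Rightarrow> ('v \<Rightarrow> nat) \<Rightarrow> 'v \<Rightarrow> nat" where
  "fgcd \<alpha> \<gamma> = (\<lambda>a. min (\<alpha> a) (\<gamma> a))"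

definition fdist :: "(int ^ 'n) set \<Rightarrow> (int ^ 'n \<Rightarrow> nat) \<Rightarrow> (int ^ 'n \<Rightarrow> nat) \<Rightarrow> nat" where
  "fdist S \<alpha> \<gamma> = max (flen S (\<lambda>a. \<alpha> a - fgcd \<alpha> \<gamma> a)) (flen S (\<lambda>a. \<gamma> a - fgcd \<alpha> \<gamma> a))"

definition dchain :: "(int ^ 'n) set \<Rightarrow> nat \<Rightarrow> (int ^ 'n \<Rightarrow> nat) \<Rightarrow> (int ^ 'n \<Rightarrow> nat) \<Rightarrow> bool" where
  "dchain S d \<alpha> \<gamma> \<longleftrightarrow> (\<exists>xs. xs \<noteq> [] \<and> hd xs = \<alpha> \<and> last xs = \<gamma> \<and> set xs \<subseteq> expvecs S \<and>
      (\<forall>j. Suc j < length xs \<longrightarrow>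
         evalf S (xs ! j) = evalf S (xs ! Suc j) \<and> fdist S (xs ! j) (xs ! Suc j) \<le> d))"

definition catenary_degree :: "(int ^ 'n) set \<Rightarrow> nat" where
  "catenary_degree S = (LEAST d. \<forall>\<alpha>\<in>expvecs S. \<forall>\<gamma>\<in>expvecs S.
      evalf S \<alpha> = evalf S \<gamma> \<longrightarrow> dchain S d \<alpha> \<gamma>)"

text \<open>The defining congruence sim_S on M (M identified with expvecs S, x^alpha with alpha).\<close>
definition defcong :: "(int ^ 'n) set \<Rightarrow> ((int ^ 'n \<Rightarrow> nat) \<times> (int ^ 'n \<Rightarrow> nat)) set" where
  "defcong S = {(\<alpha>, \<gamma>). \<alpha> \<in> expvecs S \<and> \<gamma> \<in> expvecs S \<and> evalf S \<alpha> = evalf S \<gamma>}"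

definition is_congruence :: "('v \<Rightarrow> nat) set \<Rightarrow> (('v \<Rightarrow> nat) \<times> ('v \<Rightarrow> nat)) set \<Rightarrow> bool" where
  "is_congruence M R \<longleftrightarrow> equiv M R \<and>
     (\<forall>\<alpha> \<gamma> \<beta>. (\<alpha>, \<gamma>) \<in> R \<longrightarrow> \<beta> \<in> M \<longrightarrow> ((\<lambda>a. \<alpha> a + \<beta> a), (\<lambda>a. \<gamma> a + \<beta> a)) \<in> R)"

definition cong_generated :: "('v \<Rightarrow> nat) set \<Rightarrow> (('v \<Rightarrow> nat) \<times> ('v \<Rightarrow> nat)) set
    \<Rightarrow> (('v \<Rightarrow> nat) \<times> ('v \<Rightarrow> nat)) set" where
  "cong_generated M \<Lambda> = \<Inter>{R. is_congruence M R \<and> \<Lambda> \<subseteq> R}"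

definition c_prime :: "(int ^ 'n) set \<Rightarrow> nat" where
  "c_prime S = (LEAST d. \<exists>\<Lambda>. \<Lambda> \<subseteq> expvecs S \<times> expvecs S \<and>
      cong_generated (expvecs S) \<Lambda> = defcong S \<and>
      (\<forall>(\<alpha>, \<gamma>)\<in>\<Lambda>. flen S \<alpha> \<le> d \<and> flen S \<gamma> \<le> d))"

end

theory Submission
  imports Defs
begin

(* The equality holds bound by bound: every d-chain step from alpha to gamma is the translate
   by gcd(alpha, gamma) of the relation between the cofactors alpha - gcd(alpha, gamma) and
   gamma - gcd(alpha, gamma), whose lengths are at most d, so these relations generate the
   defining congruence when all factorizations are d-chain connected; conversely, d-chain
   connectedness is itself a congruence and contains every relation of length at most d. *)

lemma nsmul_vec_add: "nsmul_vec (m + n) v = nsmul_vec m v + nsmul_vec n v"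
  by (simp add: nsmul_vec_def vec_eq_iff algebra_simps)

lemma evalf_add: "evalf S (\<lambda>a. \<alpha> a + \<beta> a) = evalf S \<alpha> + evalf S \<beta>"
  by (simp add: evalf_def nlincomb_def nsmul_vec_add sum.distrib)

lemma expvecs_add: "\<alpha> \<in> expvecs S \<Longrightarrow> \<beta> \<in> expvecs S \<Longrightarrow> (\<lambda>a. \<alpha> a + \<beta> a) \<in> expvecs S"
  by (simp add: expvecs_def)

lemma expvecs_diff: "\<alpha> \<in> expvecs S \<Longrightarrow> (\<lambda>a. \<alpha> a - \<beta> a) \<in> expvecs S"
  by (simp add: expvecs_def)

lemma flen_mono: "(\<And>a. \<alpha> a \<le> \<beta> a) \<Longrightarrow> flen S \<alpha> \<le> flen S \<beta>"
  unfolding flen_def by (simp add: sum_mono)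

lemma is_congruence_defcong: "is_congruence (expvecs S) (defcong S)"
  unfolding is_congruence_def equiv_def refl_on_def sym_def trans_def defcong_def
  by (auto simp: evalf_add expvecs_add)

lemma cong_generated_least:
  "is_congruence M R \<Longrightarrow> \<Lambda> \<subseteq> R \<Longrightarrow> cong_generated M \<Lambda> \<subseteq> R"
  unfolding cong_generated_def by blast

lemma subset_cong_generated:
  "(\<And>R. is_congruence M R \<Longrightarrow> \<Lambda> \<subseteq> R \<Longrightarrow> P \<subseteq> R) \<Longrightarrow> P \<subseteq> cong_generated M \<Lambda>"
  unfolding cong_generated_def by blast

definition gcd_cofactor :: "('v \<Rightarrow> nat) \<Rightarrow> ('v \<Rightarrow> nat) \<Rightarrow> 'v \<Rightarrow> nat" where
  "gcd_cofactor \<alpha> \<gamma> = (\<lambda>a. \<alpha> a - fgcd \<alpha> \<gamma> a)"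

lemma fgcd_commute: "fgcd \<alpha> \<gamma> = fgcd \<gamma> \<alpha>"
  by (simp add: fgcd_def min.commute)

lemma gcd_cofactor_add_fgcd: "(\<lambda>a. gcd_cofactor \<alpha> \<gamma> a + fgcd \<alpha> \<gamma> a) = \<alpha>"
  by (auto simp: fun_eq_iff gcd_cofactor_def fgcd_def)

lemma gcd_cofactor_add_right:
  "gcd_cofactor (\<lambda>a. \<alpha> a + \<beta> a) (\<lambda>a. \<gamma> a + \<beta> a) = gcd_cofactor \<alpha> \<gamma>"
  by (auto simp: fun_eq_iff gcd_cofactor_def fgcd_def min_def)

lemma fdist_gcd_cofactor:
  "fdist S \<alpha> \<gamma> = max (flen S (gcd_cofactor \<alpha> \<gamma>)) (flen S (gcd_cofactor \<gamma> \<alpha>))"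
  unfolding fdist_def gcd_cofactor_def by (simp add: fgcd_commute[of \<gamma>])

lemma fdist_commute: "fdist S \<alpha> \<gamma> = fdist S \<gamma> \<alpha>"
  by (simp add: fdist_gcd_cofactor max.commute)

lemma fdist_add_right: "fdist S (\<lambda>a. \<alpha> a + \<beta> a) (\<lambda>a. \<gamma> a + \<beta> a) = fdist S \<alpha> \<gamma>"
  by (simp add: fdist_gcd_cofactor gcd_cofactor_add_right)

lemma fdist_le_max_flen: "fdist S \<alpha> \<gamma> \<le> max (flen S \<alpha>) (flen S \<gamma>)"
proof -
  have "flen S (gcd_cofactor \<alpha> \<gamma>) \<le> flen S \<alpha>" "flen S (gcd_cofactor \<gamma> \<alpha>) \<le> flen S \<gamma>"
    by (auto intro: flen_mono simp: gcd_cofactor_def)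
  then show ?thesis by (auto simp: fdist_gcd_cofactor)
qed

lemma evalf_gcd_cofactor_eq:
  assumes "evalf S \<alpha> = evalf S \<gamma>"
  shows "evalf S (gcd_cofactor \<alpha> \<gamma>) = evalf S (gcd_cofactor \<gamma> \<alpha>)"
proof -
  have "evalf S \<alpha> = evalf S (gcd_cofactor \<alpha> \<gamma>) + evalf S (fgcd \<alpha> \<gamma>)"
       "evalf S \<gamma> = evalf S (gcd_cofactor \<gamma> \<alpha>) + evalf S (fgcd \<alpha> \<gamma>)"
    using gcd_cofactor_add_fgcd[of \<alpha> \<gamma>] gcd_cofactor_add_fgcd[of \<gamma> \<alpha>]
    by (simp_all flip: evalf_add add: fgcd_commute[of \<gamma>])
  with assms show ?thesis by simp
qed

definition dstep ::
    "(int ^ 'n) set \<Rightarrow> nat \<Rightarrow> ((int ^ 'n \<Rightarrow> nat) \<times> (int ^ 'n \<Rightarrow> nat)) set" where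
  "dstep S d = {(\<alpha>, \<gamma>). \<alpha> \<in> expvecs S \<and> \<gamma> \<in> expvecs S \<and>
     evalf S \<alpha> = evalf S \<gamma> \<and> fdist S \<alpha> \<gamma> \<le> d}"

lemma sym_dstep: "sym (dstep S d)"
  unfolding sym_def dstep_def by (auto simp: fdist_commute)

lemma dstep_add_right:
  "(\<alpha>, \<gamma>) \<in> dstep S d \<Longrightarrow> \<beta> \<in> expvecs S \<Longrightarrow> ((\<lambda>a. \<alpha> a + \<beta> a), (\<lambda>a. \<gamma> a + \<beta> a)) \<in> dstep S d"
  by (simp add: dstep_def fdist_add_right evalf_add expvecs_add)

lemma dchain_iff_rtrancl_dstep:
  "dchain S d \<alpha> \<gamma> \<longleftrightarrow> \<alpha> \<in> expvecs S \<and> (\<alpha>, \<gamma>) \<in> (dstep S d)\<^sup>*"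
proof
  assume "dchain S d \<alpha> \<gamma>"
  then obtain xs where xs: "xs \<noteq> []" "hd xs = \<alpha>" "last xs = \<gamma>" "set xs \<subseteq> expvecs S"
    and steps: "\<forall>j. Suc j < length xs \<longrightarrow>
         evalf S (xs ! j) = evalf S (xs ! Suc j) \<and> fdist S (xs ! j) (xs ! Suc j) \<le> d"
    unfolding dchain_def by blast
  have "\<forall>j < length xs - 1. (xs ! j, xs ! Suc j) \<in> dstep S d"
    using steps xs(4) by (auto simp: dstep_def dest!: nth_mem)
  with xs(1-3) have "(\<alpha>, \<gamma>) \<in> dstep S d ^^ (length xs - 1)"
    by (auto simp: relpow_fun_conv hd_conv_nth last_conv_nth)
  with xs show "\<alpha> \<in> expvecs S \<and> (\<alpha>, \<gamma>) \<in> (dstep S d)\<^sup>*"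
    by (auto simp: rtrancl_power)
next
  assume "\<alpha> \<in> expvecs S \<and> (\<alpha>, \<gamma>) \<in> (dstep S d)\<^sup>*"
  then obtain n f where "\<alpha> \<in> expvecs S" "f 0 = \<alpha>" "f n = \<gamma>"
    and steps: "\<forall>i<n. (f i, f (Suc i)) \<in> dstep S d"
    by (auto simp: rtrancl_power relpow_fun_conv)
  moreover have "f i \<in> expvecs S" if "i \<le> n" for i
    using that by (induction i) (use steps \<open>f 0 = \<alpha>\<close> \<open>\<alpha> \<in> expvecs S\<close> in \<open>auto simp: dstep_def\<close>)
  ultimately show "dchain S d \<alpha> \<gamma>"
    unfolding dchain_def dstep_def
    by (intro exI[of _ "map f [0..<Suc n]"]) (auto simp: hd_map last_map simp del: upt_Suc)
qed

lemma is_congruence_dchain: "is_congruence (expvecs S) {(\<alpha>, \<gamma>). dchain S d \<alpha> \<gamma>}"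
proof -
  have "\<gamma> \<in> expvecs S" if "(\<alpha>, \<gamma>) \<in> (dstep S d)\<^sup>*" "\<alpha> \<in> expvecs S" for \<alpha> \<gamma>
    using that by (induction rule: rtrancl_induct) (auto simp: dstep_def)
  moreover have "((\<lambda>a. \<alpha> a + \<beta> a), (\<lambda>a. \<gamma> a + \<beta> a)) \<in> (dstep S d)\<^sup>*"
    if "(\<alpha>, \<gamma>) \<in> (dstep S d)\<^sup>*" "\<beta> \<in> expvecs S" for \<alpha> \<gamma> \<beta>
    using that by (induction rule: rtrancl_induct) (auto intro: rtrancl_into_rtrancl dstep_add_right)
  moreover have "sym ((dstep S d)\<^sup>*)"
    by (rule sym_rtrancl[OF sym_dstep])
  ultimately show ?thesis
    unfolding is_congruence_def equiv_def refl_on_def sym_def trans_def dchain_iff_rtrancl_dstep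
    by (auto intro: rtrancl_trans expvecs_add)
qed

lemma dchain_in_equiv:
  assumes "equiv (expvecs S) R" and "dstep S d \<subseteq> R" and "dchain S d \<alpha> \<gamma>"
  shows "(\<alpha>, \<gamma>) \<in> R"
proof -
  from assms(3) have "(\<alpha>, \<gamma>) \<in> (dstep S d)\<^sup>*" "\<alpha> \<in> expvecs S"
    by (simp_all add: dchain_iff_rtrancl_dstep)
  then show ?thesis
    using assms(1,2) unfolding equiv_def refl_on_def trans_def
    by (induction rule: rtrancl_induct) blast+
qed

definition dstep_cofactors ::
    "(int ^ 'n) set \<Rightarrow> nat \<Rightarrow> ((int ^ 'n \<Rightarrow> nat) \<times> (int ^ 'n \<Rightarrow> nat)) set" where
  "dstep_cofactors S d = {(gcd_cofactor \<alpha> \<gamma>, gcd_cofactor \<gamma> \<alpha>) | \<alpha> \<gamma>. (\<alpha>, \<gamma>) \<in> dstep S d}"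

lemma dstep_cofactors_subset_defcong: "dstep_cofactors S d \<subseteq> defcong S"
  unfolding dstep_cofactors_def dstep_def defcong_def gcd_cofactor_def
  by (auto intro: expvecs_diff evalf_gcd_cofactor_eq[unfolded gcd_cofactor_def])

lemma flen_dstep_cofactors:
  "(\<alpha>, \<gamma>) \<in> dstep_cofactors S d \<Longrightarrow> flen S \<alpha> \<le> d \<and> flen S \<gamma> \<le> d"
  unfolding dstep_cofactors_def dstep_def by (auto simp: fdist_gcd_cofactor)

lemma dstep_subset_congruence:
  assumes R: "is_congruence (expvecs S) R" "dstep_cofactors S d \<subseteq> R"
  shows "dstep S d \<subseteq> R"
proof
  fix p assume "p \<in> dstep S d"
  then obtain \<alpha> \<gamma> where p: "p = (\<alpha>, \<gamma>)" "(\<alpha>, \<gamma>) \<in> dstep S d" "\<alpha> \<in> expvecs S"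
    by (cases p) (auto simp: dstep_def)
  then have "(gcd_cofactor \<alpha> \<gamma>, gcd_cofactor \<gamma> \<alpha>) \<in> R"
    using R(2) unfolding dstep_cofactors_def by blast
  moreover have "fgcd \<alpha> \<gamma> \<in> expvecs S"
    using p(3) by (simp add: expvecs_def fgcd_def)
  ultimately have "((\<lambda>a. gcd_cofactor \<alpha> \<gamma> a + fgcd \<alpha> \<gamma> a),
      (\<lambda>a. gcd_cofactor \<gamma> \<alpha> a + fgcd \<gamma> \<alpha> a)) \<in> R"
    using R(1) unfolding is_congruence_def by (simp add: fgcd_commute[of \<gamma>])
  then show "p \<in> R"
    by (simp add: gcd_cofactor_add_fgcd p(1))
qed

lemma bounded_generators_if_all_dchain:
  assumes "\<forall>\<alpha>\<in>expvecs S. \<forall>\<gamma>\<in>expvecs S. evalf S \<alpha> = evalf S \<gamma> \<longrightarrow> dchain S d \<alpha> \<gamma>"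
  shows "\<exists>\<Lambda>. \<Lambda> \<subseteq> expvecs S \<times> expvecs S \<and> cong_generated (expvecs S) \<Lambda> = defcong S \<and>
      (\<forall>(\<alpha>, \<gamma>)\<in>\<Lambda>. flen S \<alpha> \<le> d \<and> flen S \<gamma> \<le> d)"
proof (intro exI conjI)
  show "dstep_cofactors S d \<subseteq> expvecs S \<times> expvecs S"
    using dstep_cofactors_subset_defcong by (auto simp: defcong_def)
  show "\<forall>(\<alpha>, \<gamma>)\<in>dstep_cofactors S d. flen S \<alpha> \<le> d \<and> flen S \<gamma> \<le> d"
    using flen_dstep_cofactors by blast
  show "cong_generated (expvecs S) (dstep_cofactors S d) = defcong S"
  proof
    show "cong_generated (expvecs S) (dstep_cofactors S d) \<subseteq> defcong S"
      by (rule cong_generated_least[OF is_congruence_defcong dstep_cofactors_subset_defcong])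
    show "defcong S \<subseteq> cong_generated (expvecs S) (dstep_cofactors S d)"
    proof (rule subset_cong_generated)
      fix R assume R: "is_congruence (expvecs S) R" "dstep_cofactors S d \<subseteq> R"
      then have "equiv (expvecs S) R" "dstep S d \<subseteq> R"
        using dstep_subset_congruence[OF R] by (simp_all add: is_congruence_def)
      with assms show "defcong S \<subseteq> R"
        by (auto simp: defcong_def intro: dchain_in_equiv)
    qed
  qed
qed

lemma dstep_if_defcong_flen_le:
  assumes "(\<alpha>, \<gamma>) \<in> defcong S" and "flen S \<alpha> \<le> d" and "flen S \<gamma> \<le> d"
  shows "(\<alpha>, \<gamma>) \<in> dstep S d"
proof -
  have "fdist S \<alpha> \<gamma> \<le> d"
    using fdist_le_max_flen[of S \<alpha> \<gamma>] assms(2,3) by linarith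
  with assms(1) show ?thesis
    by (simp add: defcong_def dstep_def)
qed

lemma all_dchain_if_bounded_generators:
  assumes gen: "cong_generated (expvecs S) \<Lambda> = defcong S"
    and bnd: "\<forall>(\<alpha>, \<gamma>)\<in>\<Lambda>. flen S \<alpha> \<le> d \<and> flen S \<gamma> \<le> d"
  shows "\<forall>\<alpha>\<in>expvecs S. \<forall>\<gamma>\<in>expvecs S. evalf S \<alpha> = evalf S \<gamma> \<longrightarrow> dchain S d \<alpha> \<gamma>"
proof -
  have "\<Lambda> \<subseteq> defcong S"
    using subset_cong_generated[of "expvecs S" \<Lambda> \<Lambda>] gen by simp
  with bnd have "\<Lambda> \<subseteq> dstep S d"
    by (auto intro: dstep_if_defcong_flen_le)
  then have "\<Lambda> \<subseteq> {(\<alpha>, \<gamma>). dchain S d \<alpha> \<gamma>}"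
    by (auto simp: dchain_iff_rtrancl_dstep dstep_def)
  then have "defcong S \<subseteq> {(\<alpha>, \<gamma>). dchain S d \<alpha> \<gamma>}"
    unfolding gen[symmetric] by (rule cong_generated_least[OF is_congruence_dchain])
  then show ?thesis
    by (auto simp: defcong_def)
qed

lemma all_dchain_iff_bounded_generators:
  "(\<forall>\<alpha>\<in>expvecs S. \<forall>\<gamma>\<in>expvecs S. evalf S \<alpha> = evalf S \<gamma> \<longrightarrow> dchain S d \<alpha> \<gamma>) \<longleftrightarrow>
   (\<exists>\<Lambda>. \<Lambda> \<subseteq> expvecs S \<times> expvecs S \<and> cong_generated (expvecs S) \<Lambda> = defcong S \<and>
      (\<forall>(\<alpha>, \<gamma>)\<in>\<Lambda>. flen S \<alpha> \<le> d \<and> flen S \<gamma> \<le> d))"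
  (is "?chains \<longleftrightarrow> ?generators")
proof
  show ?generators if ?chains
    using that by (rule bounded_generators_if_all_dchain)
  show ?chains if ?generators
    using that by (elim exE conjE) (rule all_dchain_if_bounded_generators)
qed

theorem proposition2p3:
  fixes S :: "(int ^ 'n) set"
  assumes "affine_monoid S" and "reduced_monoid S"
  shows "catenary_degree S = c_prime S"
  unfolding catenary_degree_def c_prime_def all_dchain_iff_bounded_generators ..

end
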